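(* Let $q=p^e$ with $p$ a prime and $e\ge1$, let $r\ge2$, $m=2r$, and assume $(q,r)\ne(2,2)$. Let $D=\{x\in\mathbb{F}_{q^m}:\mathrm{Tr}_{q^r/q}(x^{q^r+1})=0\}$ and $\overline{\mathcal{C}_D}=\{(\mathrm{Tr}_{q^m/q}(bx)+c)_{x\in D}: b\in\mathbb{F}_{q^m},\ c\in\mathbb{F}_q\}$. Then $\overline{\mathcal{C}_D}$ is self-orthogonal, i.e. $\overline{\mathcal{C}_D}\subseteq\overline{\mathcal{C}_D}^{\perp}$.
   Context: $\mathrm{Tr}_{q^k/q}$ is the trace map from $\mathbb{F}_{q^k}$ to $\mathbb{F}_q$; the dual is with respect to the standard inner product on $\mathbb{F}_q^{|D|}$. *)

theory Defs
  imports "HOL-Computational_Algebra.Primes" "HOL-Library.FuncSet"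
begin

text \<open>We work in a finite field type 'a of cardinality q^m. The subfield F_{q^k}
  (for k dividing m) is the set of roots of X^(q^k) - X.\<close>

definition subfield_of_order :: "nat \<Rightarrow> ('a::{field,finite}) set" where
  "subfield_of_order Q = {x. x ^ Q = x}"

definition trace :: "nat \<Rightarrow> nat \<Rightarrow> 'a::{field,finite} \<Rightarrow> 'a" where
  "trace q k x = (\<Sum>i<k. x ^ (q ^ i))"

definition defset :: "nat \<Rightarrow> nat \<Rightarrow> ('a::{field,finite}) set" where
  "defset q r = {x. trace q r (x ^ (q ^ r + 1)) = 0}"

text \<open>Augmented code: codewords (Tr_{q^m/q}(b x) + c)_{x in D}, b in F_{q^m}, c in F_q,
  represented as functions on D (extensional, undefined outside D).\<close>
definition aug_code :: "nat \<Rightarrow> nat \<Rightarrow> ('a::{field,finite} \<Rightarrow> 'a) set" where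
  "aug_code q r = {restrict (\<lambda>x. trace q (2*r) (b * x) + c) (defset q r) | b c.
                    c \<in> subfield_of_order q}"

definition dual_code :: "('a::{field,finite}) set \<Rightarrow> nat \<Rightarrow> ('a \<Rightarrow> 'a) set \<Rightarrow> ('a \<Rightarrow> 'a) set" where
  "dual_code D q C = {v \<in> D \<rightarrow>\<^sub>E subfield_of_order q. \<forall>u\<in>C. (\<Sum>x\<in>D. u x * v x) = 0}"

end

theory Submission
  imports Defs "HOL-Computational_Algebra.Polynomial" "HOL-Number_Theory.Residues"
begin

text \<open>Write \<open>Q = q^r\<close>, so that the field has \<open>Q^2\<close> elements, and let \<open>N x = x^(Q+1)\<close> be
  the norm onto the subfield \<open>F_Q\<close>. Then \<open>D\<close> is the preimage under \<open>N\<close> of the kernel \<open>K\<close> of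
  the trace from \<open>F_Q\<close> to \<open>F_q\<close>, and every fibre of \<open>N\<close> over \<open>F_Q\<close> has \<open>1\<close> or \<open>Q + 1\<close>
  elements, i.e. \<open>1\<close> element counted in the field; so sums over \<open>D\<close> of functions of \<open>N x\<close>
  are sums over \<open>K\<close>. Since \<open>Tr(b x)\<close> lies in \<open>F_q\<close>, the inner product of two codewords
  expands into \<open>|D|\<close>, \<open>\<Sum>x\<in>D. x\<close> and \<open>\<Sum>x\<in>D. x^(1+q^j)\<close> for \<open>j < 2r\<close>. Now \<open>|D| = |K| = 0\<close>
  in the field because \<open>K\<close> is a nonzero \<open>F_p\<close>-space, and \<open>D\<close> is stable under multiplication
  by the \<open>(Q+1)\<close>-st roots of unity, which kills every power sum \<open>\<Sum>x\<in>D. x^k\<close> unless \<open>z^k = 1\<close>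
  for all of them. Among the exponents at hand this happens only for \<open>k = q^r + 1\<close>, where the
  sum is \<open>\<Sum>K\<close>: it vanishes as \<open>K = -K\<close> in odd characteristic, and in characteristic 2
  because \<open>K\<close> then has at least four elements, which is where \<open>(q, r) \<noteq> (2, 2)\<close> is needed.\<close>

lemma prime_CHAR_finite_field: "prime CHAR('a::{field,finite})"
  by (rule prime_CHAR_semidom) (simp add: finite_imp_CHAR_pos)

lemma CHAR_eq_of_card_UNIV:
  assumes "prime p" and "card (UNIV :: 'a::{field,finite} set) = p ^ n"
  shows "CHAR('a) = p"
proof -
  have "CHAR('a) dvd p ^ n"
    using CHAR_dvd_CARD[where 'a = 'a] assms(2) by simp
  then have "CHAR('a) dvd p"
    using prime_CHAR_finite_field prime_dvd_power by blast
  then show ?thesis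
    using prime_CHAR_finite_field assms(1) primes_dvd_imp_eq by blast
qed

lemma two_eq_zero_iff_CHAR_eq_2: "(2::'a::{field,finite}) = 0 \<longleftrightarrow> CHAR('a) = 2"
proof
  assume "(2::'a) = 0"
  then have "CHAR('a) dvd 2"
    using of_nat_eq_0_iff_char_dvd[where 'a = 'a, of 2] by simp
  then show "CHAR('a) = 2"
    using prime_CHAR_finite_field two_is_prime_nat primes_dvd_imp_eq by blast
next
  assume "CHAR('a) = 2"
  then show "(2::'a) = 0"
    using of_nat_CHAR[where 'a = 'a] by simp
qed

lemma power_card_UNIV_eq_self: "(x::'a::{field,finite}) ^ card (UNIV :: 'a set) = x"
proof (cases "x = 0")
  case True
  then show ?thesis
    using finite_UNIV_card_ge_0[where 'a = 'a] by simp
next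
  case False
  let ?U = "UNIV - {0::'a}"
  have "(\<Prod>y\<in>?U. x * y) = \<Prod>?U"
    by (rule prod.reindex_bij_witness[of _ "\<lambda>y. y / x" "\<lambda>y. x * y"]) (use False in auto)
  then have "x ^ card ?U = 1"
    by (simp add: prod.distrib)
  then have "x ^ Suc (card ?U) = x"
    by simp
  moreover have "Suc (card ?U) = card (UNIV :: 'a set)"
    by (rule card_Suc_Diff1) simp_all
  ultimately show ?thesis
    by simp
qed

lemma card_power_eq_le:
  assumes "0 < n"
  shows "card {x::'a::idom. x ^ n = c} \<le> n"
proof -
  let ?P = "Polynomial.monom 1 n + [:-c:] :: 'a poly"
  have "degree ?P = n"
    using assms by (simp add: degree_add_eq_left degree_monom_eq)
  then have "card {x. poly ?P x = 0} \<le> n"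
    using assms card_poly_roots_bound[of ?P] by (metis degree_0 not_less0)
  then show ?thesis
    by (simp add: poly_monom)
qed

lemma card_power_eq_self_le:
  assumes "1 < n"
  shows "card {x::'a::idom. x ^ n = x} \<le> n"
proof -
  let ?P = "Polynomial.monom 1 n - Polynomial.monom 1 1 :: 'a poly"
  have "degree ?P = n"
    using assms by (simp only: diff_conv_add_uminus, subst degree_add_eq_left) (simp_all add: degree_monom_eq)
  then have "card {x. poly ?P x = 0} \<le> n"
    using assms card_poly_roots_bound[of ?P] by (metis degree_0 not_less0)
  then show ?thesis
    by (simp add: poly_monom)
qed

lemma card_power_eq_power:
  assumes "(a::'a::field) \<noteq> 0"
  shows "card {x. x ^ n = a ^ n} = card {z::'a. z ^ n = 1}"
proof -
  have "{x. x ^ n = a ^ n} = (\<lambda>z. a * z) ` {z. z ^ n = 1}"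
  proof (intro equalityI subsetI)
    fix x assume "x \<in> {x. x ^ n = a ^ n}"
    then have "x = a * (x / a)" and "(x / a) ^ n = 1"
      using assms by (simp_all add: power_divide)
    then show "x \<in> (\<lambda>z. a * z) ` {z. z ^ n = 1}"
      by blast
  qed (auto simp: power_mult_distrib)
  then show ?thesis
    using assms by (simp add: card_image inj_on_def)
qed

lemma card_power_image_mult_card_roots_unity:
  assumes "0 < n"
  shows "card ((\<lambda>x. x ^ n) ` (UNIV - {0::'a::{field,finite}})) * card {z::'a. z ^ n = 1}
           = card (UNIV :: 'a set) - 1"
proof -
  let ?U = "UNIV - {0::'a}"
  have "card (UNIV :: 'a set) - 1 = card ?U"
    by (rule card_Diff_singleton[symmetric]) simp
  also have "\<dots> = (\<Sum>y\<in>(\<lambda>x. x ^ n) ` ?U. card {x\<in>?U. x ^ n = y})"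
    using sum.image_gen[of ?U "\<lambda>_. 1::nat" "\<lambda>x. x ^ n"] by simp
  also have "\<dots> = (\<Sum>y\<in>(\<lambda>x. x ^ n) ` ?U. card {z::'a. z ^ n = 1})"
  proof (rule sum.cong[OF refl])
    fix y assume "y \<in> (\<lambda>x. x ^ n) ` ?U"
    then obtain a where a: "a \<noteq> 0" "y = a ^ n"
      by auto
    then have "{x\<in>?U. x ^ n = y} = {x. x ^ n = a ^ n}"
      using assms by (auto simp: zero_power)
    then show "card {x\<in>?U. x ^ n = y} = card {z::'a. z ^ n = 1}"
      using card_power_eq_power[OF a(1)] by simp
  qed
  also have "\<dots> = card ((\<lambda>x. x ^ n) ` ?U) * card {z::'a. z ^ n = 1}"
    by simp
  finally show ?thesis
    by simp
qed

section \<open>Sums over stable sets\<close>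

lemma sum_power_eq_0_if_mult_stable:
  fixes S :: "'a::field set"
  assumes "z \<noteq> 0" and stable: "\<And>x. z * x \<in> S \<longleftrightarrow> x \<in> S" and "z ^ k \<noteq> 1"
  shows "(\<Sum>x\<in>S. x ^ k) = 0"
proof -
  have "x / z \<in> S" if "x \<in> S" for x
    using stable[of "x / z"] assms(1) that by simp
  then have "(\<Sum>x\<in>S. (z * x) ^ k) = (\<Sum>x\<in>S. x ^ k)"
    using assms(1) stable
    by (intro sum.reindex_bij_witness[of _ "\<lambda>x. x / z" "\<lambda>x. z * x"]) simp_all
  then have "z ^ k * (\<Sum>x\<in>S. x ^ k) = 1 * (\<Sum>x\<in>S. x ^ k)"
    by (simp add: power_mult_distrib sum_distrib_left)
  then show ?thesis
    using assms(3) by (metis mult_cancel_right)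
qed

lemma of_nat_card_eq_0_if_add_closed:
  fixes A :: "'a::idom set"
  assumes "finite A" and "\<And>a b. a \<in> A \<Longrightarrow> b \<in> A \<Longrightarrow> a + b \<in> A" and "2 \<le> card A"
  shows "of_nat (card A) = (0::'a)"
proof -
  have "\<not> A \<subseteq> {0}"
    using card_mono[of "{0}" A] assms(3) by auto
  then obtain k where k: "k \<in> A" "k \<noteq> 0"
    by auto
  have inj: "inj_on (\<lambda>a. a + k) A"
    by (simp add: inj_on_def)
  have "(\<lambda>a. a + k) ` A = A"
    by (rule endo_inj_surj) (use assms(1,2) k inj in auto)
  then have "(\<Sum>a\<in>A. a) = (\<Sum>a\<in>A. a + k)"
    using sum.reindex[OF inj, of "\<lambda>a. a"] by simp
  then have "of_nat (card A) * k = 0"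
    by (simp add: sum.distrib)
  then show ?thesis
    using k(2) by simp
qed

lemma sum_eq_0_if_uminus_closed:
  fixes A :: "'a::idom set"
  assumes "(2::'a) \<noteq> 0" and "\<And>a. a \<in> A \<Longrightarrow> - a \<in> A"
  shows "(\<Sum>a\<in>A. a) = 0"
proof -
  have "(\<Sum>a\<in>A. - a) = (\<Sum>a\<in>A. a)"
    by (rule sum.reindex_bij_witness[of _ uminus uminus]) (simp_all add: assms(2))
  then have "- (\<Sum>a\<in>A. a) = (\<Sum>a\<in>A. a)"
    by (simp add: sum_negf)
  then have "2 * (\<Sum>a\<in>A. a) = 0"
    by (metis mult_2 neg_eq_iff_add_eq_0)
  then show ?thesis
    using assms(1) by simp
qed

lemma sum_eq_half_card_mult_char_2:
  fixes A :: "'a::comm_ring_1 set"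
  assumes "finite A" and stable: "\<And>a. a \<in> A \<Longrightarrow> a + k \<in> A"
    and "(2::'a) = 0" and "k \<noteq> 0"
  shows "(\<Sum>a\<in>A. a) = of_nat (card A div 2) * k"
proof -
  let ?orbit = "\<lambda>a. {a, a + k}"
  have "x + k + k = x" for x
    using assms(3) by (metis add.assoc add_0_right mult_2 mult_zero_left)
  then have fibre: "{x \<in> A. ?orbit x = ?orbit a} = ?orbit a" if "a \<in> A" for a
    using that stable by auto
  have "(\<Sum>a\<in>A. a) = (\<Sum>B\<in>?orbit ` A. \<Sum>x\<in>{x \<in> A. ?orbit x = B}. x)"
    using assms(1) by (rule sum.image_gen)
  also have "\<dots> = (\<Sum>B\<in>?orbit ` A. k)"
  proof (rule sum.cong[OF refl])
    fix B assume "B \<in> ?orbit ` A"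
    then obtain a where "a \<in> A" and "B = ?orbit a"
      by blast
    then show "(\<Sum>x\<in>{x \<in> A. ?orbit x = B}. x) = k"
      using fibre assms(3,4) by (simp add: algebra_simps)
  qed
  finally have sum_A: "(\<Sum>a\<in>A. a) = of_nat (card (?orbit ` A)) * k"
    by simp
  have "card A = (\<Sum>B\<in>?orbit ` A. card {x \<in> A. ?orbit x = B})"
    using sum.image_gen[OF assms(1), of "\<lambda>_. 1::nat" ?orbit] by simp
  also have "\<dots> = (\<Sum>B\<in>?orbit ` A. 2)"
    using fibre assms(4) by (intro sum.cong) auto
  finally show ?thesis
    using sum_A by simp
qed

lemma sum_eq_0_if_add_closed_char_2:
  fixes A :: "'a::idom set"
  assumes "finite A" and "\<And>a b. a \<in> A \<Longrightarrow> b \<in> A \<Longrightarrow> a + b \<in> A"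
    and "(2::'a) = 0" and "2 < card A"
  shows "(\<Sum>a\<in>A. a) = 0"
proof -
  have "\<not> A \<subseteq> {0}"
    using card_mono[of "{0}" A] assms(4) by auto
  then obtain k where k: "k \<in> A" "k \<noteq> 0"
    by auto
  have "card {0, k} \<le> 2"
    by (simp add: card_insert_if)
  then have "\<not> A \<subseteq> {0, k}"
    using card_mono[of "{0, k}" A] assms(4) by auto
  then obtain l where l: "l \<in> A" "l \<noteq> 0" "l \<noteq> k"
    by auto
  have "(\<Sum>a\<in>A. a) = of_nat (card A div 2) * k"
    using assms k by (intro sum_eq_half_card_mult_char_2) auto
  moreover have "(\<Sum>a\<in>A. a) = of_nat (card A div 2) * l"
    using assms l by (intro sum_eq_half_card_mult_char_2) auto
  ultimately have "of_nat (card A div 2) * (k - l) = (0::'a)"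
    by (metis right_diff_distrib diff_self)
  then have "of_nat (card A div 2) = (0::'a)"
    using l(3) by simp
  with \<open>(\<Sum>a\<in>A. a) = of_nat (card A div 2) * k\<close> show ?thesis
    by simp
qed

section \<open>The norm from \<open>F_{Q^2}\<close> to \<open>F_Q\<close>\<close>

context
  fixes Q :: nat
  assumes card_UNIV_eq_square: "card (UNIV :: 'a::{field,finite} set) = Q ^ 2"
begin

lemma two_le_sqrt_card: "2 \<le> Q"
proof (rule ccontr)
  have "card {0::'a, 1} \<le> card (UNIV :: 'a set)"
    by (rule card_mono) simp_all
  then have "2 \<le> Q ^ 2"
    using card_UNIV_eq_square by simp
  moreover assume "\<not> 2 \<le> Q"
  then have "Q ^ 2 \<le> 1"
    by (intro power_le_one) auto
  ultimately show False
    by simp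
qed

lemma of_nat_sqrt_card: "of_nat Q = (0::'a)"
proof -
  have "CHAR('a) dvd Q ^ 2"
    using CHAR_dvd_CARD[where 'a = 'a] card_UNIV_eq_square by simp
  then have "CHAR('a) dvd Q"
    using prime_CHAR_finite_field prime_dvd_power by blast
  then show ?thesis
    by (simp add: of_nat_eq_0_iff_char_dvd)
qed

lemma power_sqrt_card_square: "(x::'a) ^ (Q * Q) = x"
  using power_card_UNIV_eq_self[of x] card_UNIV_eq_square by (simp add: power2_eq_square)

lemma norm_mem_subfield: "(x::'a) ^ (Q + 1) \<in> subfield_of_order Q"
proof -
  have "(x ^ (Q + 1)) ^ Q = x ^ (Q * Q) * x ^ Q"
    by (simp add: power_mult[symmetric] power_add[symmetric] algebra_simps)
  then show ?thesis
    by (simp add: subfield_of_order_def power_sqrt_card_square power_add mult.commute)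
qed

lemma norm_image_subset: "(\<lambda>x. x ^ (Q + 1)) ` (UNIV - {0::'a}) \<subseteq> {y. y ^ (Q - 1) = 1}"
proof
  fix y assume "y \<in> (\<lambda>x. x ^ (Q + 1)) ` (UNIV - {0::'a})"
  then obtain x where x: "x \<noteq> 0" "y = x ^ (Q + 1)"
    by auto
  have "x ^ (Q * Q - 1) * x = x ^ (Q * Q)"
    using two_le_sqrt_card by (intro power_minus_mult) simp
  then have "x ^ (Q * Q - 1) = 1"
    using x(1) power_sqrt_card_square[of x] by simp
  have "y ^ (Q - 1) = x ^ ((Q + 1) * (Q - 1))"
    using x(2) by (simp only: power_mult)
  also have "(Q + 1) * (Q - 1) = Q * Q - 1"
    by (simp add: algebra_simps diff_mult_distrib2)
  finally show "y \<in> {y. y ^ (Q - 1) = 1}"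
    using \<open>x ^ (Q * Q - 1) = 1\<close> by simp
qed

lemma norm_image: "(\<lambda>x. x ^ (Q + 1)) ` (UNIV - {0::'a}) = {y. y ^ (Q - 1) = 1}"
  and card_norm_image: "card ((\<lambda>x. x ^ (Q + 1)) ` (UNIV - {0::'a})) = Q - 1"
  and card_norm_kernel: "card {z::'a. z ^ (Q + 1) = 1} = Q + 1"
proof -
  let ?I = "(\<lambda>x. x ^ (Q + 1)) ` (UNIV - {0::'a})"
  let ?R = "{y::'a. y ^ (Q - 1) = 1}"
  let ?M = "{z::'a. z ^ (Q + 1) = 1}"
  txt \<open>The nonzero fibres of the norm are cosets of \<open>?M\<close>, so \<open>|?I| |?M| = Q^2 - 1\<close>; the root
    bounds \<open>|?I| \<le> Q - 1\<close> and \<open>|?M| \<le> Q + 1\<close> must then both be equalities.\<close>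
  have Q: "2 \<le> Q"
    by (rule two_le_sqrt_card)
  have "card ?I * card ?M = Q * Q - 1"
    using card_power_image_mult_card_roots_unity[of "Q + 1", where 'a = 'a] card_UNIV_eq_square
    by (simp add: power2_eq_square)
  also have "\<dots> = (Q - 1) * (Q + 1)"
    by (simp add: algebra_simps diff_mult_distrib)
  finally have prod: "card ?I * card ?M = (Q - 1) * (Q + 1)" .
  have card_R: "card ?R \<le> Q - 1"
    using Q by (intro card_power_eq_le) simp
  have card_I: "card ?I \<le> card ?R"
    using norm_image_subset by (intro card_mono) simp_all
  have card_M: "card ?M \<le> Q + 1"
    by (rule card_power_eq_le) simp
  show I_eq: "card ?I = Q - 1"
  proof (rule ccontr)
    assume "card ?I \<noteq> Q - 1"
    then have "card ?I < Q - 1"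
      using card_I card_R by simp
    have "card ?I * card ?M \<le> card ?I * (Q + 1)"
      using card_M by (rule mult_le_mono2)
    also have "\<dots> < (Q - 1) * (Q + 1)"
      using \<open>card ?I < Q - 1\<close> by (rule mult_less_mono1) simp
    finally show False
      using prod by simp
  qed
  have "(Q - 1) * card ?M = (Q - 1) * (Q + 1)"
    using prod by (simp only: I_eq)
  moreover have "Q - 1 \<noteq> 0"
    using Q by simp
  ultimately show "card ?M = Q + 1"
    by (metis mult_left_cancel)
  show "?I = ?R"
    using norm_image_subset card_I card_R I_eq by (intro card_subset_eq) simp_all
qed

lemma range_norm: "range (\<lambda>x::'a. x ^ (Q + 1)) = subfield_of_order Q"
proof (intro equalityI subsetI)
  fix y :: 'a
  assume "y \<in> subfield_of_order Q"
  then have y: "y ^ Q = y"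
    by (simp add: subfield_of_order_def)
  show "y \<in> range (\<lambda>x. x ^ (Q + 1))"
  proof (cases "y = 0")
    case True
    then show ?thesis
      by (intro range_eqI[of _ _ 0]) simp
  next
    case False
    have "y ^ (Q - 1) * y = y ^ Q"
      using two_le_sqrt_card by (intro power_minus_mult) simp
    then have "y ^ (Q - 1) = 1"
      using y False by simp
    then have "y \<in> (\<lambda>x. x ^ (Q + 1)) ` (UNIV - {0})"
      using False norm_image by simp
    then show ?thesis
      by blast
  qed
qed (blast intro: norm_mem_subfield)

lemma card_subfield_of_order: "card (subfield_of_order Q :: 'a set) = Q"
proof -
  let ?f = "\<lambda>x::'a. x ^ (Q + 1)"
  let ?I = "?f ` (UNIV - {0})"
  have "subfield_of_order Q = range ?f"
    by (rule range_norm[symmetric])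
  also have "\<dots> = ?f ` insert 0 (UNIV - {0})"
    by (simp only: insert_Diff_single insert_UNIV)
  also have "\<dots> = insert 0 ?I"
    by (simp only: image_insert) simp
  finally have "card (subfield_of_order Q :: 'a set) = card (insert 0 ?I)"
    by simp
  also have "\<dots> = Suc (card ?I)"
    by (rule card_insert_disjoint) auto
  also have "\<dots> = Suc (Q - 1)"
    by (simp only: card_norm_image)
  also have "\<dots> = Q"
    using two_le_sqrt_card by simp
  finally show ?thesis .
qed

lemma exists_norm_one_power_ne_one:
  assumes "0 < d" and "d < Q + 1"
  shows "\<exists>z::'a. z ^ (Q + 1) = 1 \<and> z ^ d \<noteq> 1"
proof (rule ccontr)
  assume "\<not> ?thesis"
  then have "{z::'a. z ^ (Q + 1) = 1} \<subseteq> {z. z ^ d = 1}"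
    by auto
  then have "card {z::'a. z ^ (Q + 1) = 1} \<le> card {z::'a. z ^ d = 1}"
    by (intro card_mono) simp_all
  then have "Q + 1 \<le> card {z::'a. z ^ d = 1}"
    by (simp only: card_norm_kernel)
  also have "\<dots> \<le> d"
    using assms(1) by (rule card_power_eq_le)
  finally show False
    using assms(2) by simp
qed

lemma of_nat_card_norm_fibre:
  assumes "a \<in> subfield_of_order Q"
  shows "of_nat (card {x::'a. x ^ (Q + 1) = a}) = (1::'a)"
proof (cases "a = 0")
  case True
  then have "{x::'a. x ^ (Q + 1) = a} = {0}"
    by auto
  then show ?thesis
    by simp
next
  case False
  obtain x0 :: 'a where x0: "a = x0 ^ (Q + 1)"
    using assms range_norm by blast
  with False have "x0 \<noteq> 0"
    by auto
  then have "card {x::'a. x ^ (Q + 1) = a} = card {z::'a. z ^ (Q + 1) = 1}"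
    unfolding x0 by (rule card_power_eq_power)
  then have "card {x::'a. x ^ (Q + 1) = a} = Q + 1"
    by (simp only: card_norm_kernel)
  then show ?thesis
    using of_nat_sqrt_card by simp
qed

lemma sum_norm_preimage:
  fixes h :: "'a \<Rightarrow> 'a"
  assumes "K \<subseteq> subfield_of_order Q"
  shows "(\<Sum>x | x ^ (Q + 1) \<in> K. h (x ^ (Q + 1))) = (\<Sum>a\<in>K. h a)"
proof -
  let ?N = "\<lambda>x::'a. x ^ (Q + 1)"
  have "(\<Sum>x | ?N x \<in> K. h (?N x)) = (\<Sum>a\<in>K. \<Sum>x\<in>{x \<in> {x. ?N x \<in> K}. ?N x = a}. h (?N x))"
    by (rule sum.group[symmetric]) auto
  also have "\<dots> = (\<Sum>a\<in>K. of_nat (card {x. ?N x = a}) * h a)"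
  proof (rule sum.cong[OF refl])
    fix a assume "a \<in> K"
    then have "{x \<in> {x. ?N x \<in> K}. ?N x = a} = {x. ?N x = a}"
      by auto
    moreover have "(\<Sum>x | ?N x = a. h (?N x)) = (\<Sum>x | ?N x = a. h a)"
      by (rule sum.cong) auto
    ultimately show "(\<Sum>x\<in>{x \<in> {x. ?N x \<in> K}. ?N x = a}. h (?N x)) = of_nat (card {x. ?N x = a}) * h a"
      by simp
  qed
  also have "\<dots> = (\<Sum>a\<in>K. h a)"
    using assms of_nat_card_norm_fibre by (intro sum.cong) auto
  finally show ?thesis .
qed

end

lemma sum_power_defset_eq_0:
  assumes "(z::'a::{field,finite}) ^ (q ^ r + 1) = 1" and "z ^ k \<noteq> 1"
  shows "(\<Sum>x\<in>defset q r. x ^ k) = (0::'a)"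
proof -
  have "z \<noteq> 0"
    using assms(1) by (auto simp: power_0_left)
  moreover have "z * x \<in> defset q r \<longleftrightarrow> x \<in> defset q r" for x
    unfolding defset_def mem_Collect_eq by (simp only: power_mult_distrib assms(1) mult_1_left)
  ultimately show ?thesis
    using assms(2) by (rule sum_power_eq_0_if_mult_stable)
qed

section \<open>The trace and its kernel\<close>

lemma sum_lessThan_shift_periodic:
  assumes "f k = f 0"
  shows "(\<Sum>i<k. f (Suc i)) = (\<Sum>i<k. f i :: 'a::comm_monoid_add)"
proof (cases k)
  case (Suc n)
  have "(\<Sum>i<Suc n. f (Suc i)) = (\<Sum>i<n. f (Suc i)) + f (Suc n)"
    by (rule sum.lessThan_Suc)
  also have "\<dots> = f 0 + (\<Sum>i<n. f (Suc i))"
    using assms Suc by (simp add: add.commute)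
  also have "\<dots> = (\<Sum>i<Suc n. f i)"
    by (rule sum.lessThan_Suc_shift[symmetric])
  finally show ?thesis
    unfolding Suc .
qed simp

lemma power_power_eq_self: "(c::'a::monoid_mult) ^ q = c \<Longrightarrow> c ^ (q ^ i) = c"
  by (induction i) (simp_all add: power_mult)

definition trace_kernel :: "nat \<Rightarrow> nat \<Rightarrow> 'a::{field,finite} set" where
  "trace_kernel q r = {a \<in> subfield_of_order (q ^ r). trace q r a = 0}"

lemma trace_kernel_subset: "trace_kernel q r \<subseteq> subfield_of_order (q ^ r)"
  by (auto simp: trace_kernel_def)

lemma trace_mult_subfield:
  assumes "c \<in> subfield_of_order q"
  shows "trace q k (c * x) = c * trace q k x"
  using assms power_power_eq_self[of c q]
  by (simp add: trace_def subfield_of_order_def power_mult_distrib sum_distrib_left)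

context
  fixes q e :: nat
  assumes q_CHAR_power: "q = CHAR('a::{field,finite}) ^ e"
begin

lemma q_pos: "0 < q"
  using q_CHAR_power prime_CHAR_finite_field[where 'a = 'a] prime_gt_0_nat by simp

lemma power_q_power_add: "((x::'a) + y) ^ (q ^ i) = x ^ (q ^ i) + y ^ (q ^ i)"
  using freshmans_dream'[OF prime_CHAR_finite_field, of "q ^ i" "e * i" x y] q_CHAR_power
  by (simp add: power_mult)

lemma power_q_power_sum: "(\<Sum>a\<in>A. f a :: 'a) ^ (q ^ i) = (\<Sum>a\<in>A. f a ^ (q ^ i))"
  using freshmans_dream_sum'[OF prime_CHAR_finite_field, of "q ^ i" "e * i" f A] q_CHAR_power
  by (simp add: power_mult)

lemma power_q_power_diff: "((x::'a) - y) ^ (q ^ i) = x ^ (q ^ i) - y ^ (q ^ i)"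
  using power_q_power_add[of "x - y" y i] by simp

lemma subfield_of_order_add:
  "x \<in> subfield_of_order (q ^ i) \<Longrightarrow> y \<in> subfield_of_order (q ^ i) \<Longrightarrow>
    (x::'a) + y \<in> subfield_of_order (q ^ i)"
  by (simp add: subfield_of_order_def power_q_power_add)

lemma subfield_of_order_diff:
  "x \<in> subfield_of_order (q ^ i) \<Longrightarrow> y \<in> subfield_of_order (q ^ i) \<Longrightarrow>
    (x::'a) - y \<in> subfield_of_order (q ^ i)"
  by (simp add: subfield_of_order_def power_q_power_diff)

lemma trace_add: "trace q k ((x::'a) + y) = trace q k x + trace q k y"
  by (simp add: trace_def power_q_power_add sum.distrib)

lemma trace_diff: "trace q k ((x::'a) - y) = trace q k x - trace q k y"
  by (simp add: trace_def power_q_power_diff sum_subtractf)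

lemma trace_sum: "trace q k (\<Sum>a\<in>A. f a :: 'a) = (\<Sum>a\<in>A. trace q k (f a))"
  unfolding trace_def by (simp add: power_q_power_sum sum.swap[of _ A])

lemma trace_zero: "trace q k (0::'a) = 0"
  using q_pos by (simp add: trace_def zero_power)

lemma trace_mem_subfield:
  assumes "(x::'a) \<in> subfield_of_order (q ^ k)"
  shows "trace q k x \<in> subfield_of_order q"
proof -
  let ?f = "\<lambda>i. x ^ (q ^ i)"
  have "trace q k x ^ q = (\<Sum>i<k. ?f (Suc i))"
    using power_q_power_sum[of ?f "{..<k}" 1]
    by (simp add: trace_def power_mult[symmetric] mult.commute)
  also have "\<dots> = (\<Sum>i<k. ?f i)"
    using assms by (intro sum_lessThan_shift_periodic) (simp add: subfield_of_order_def)
  finally show ?thesis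
    by (simp add: subfield_of_order_def trace_def)
qed

lemma zero_mem_trace_kernel: "0 \<in> (trace_kernel q r :: 'a set)"
  using q_pos by (simp add: trace_kernel_def subfield_of_order_def trace_zero zero_power)

lemma trace_kernel_add:
  "a \<in> trace_kernel q r \<Longrightarrow> b \<in> trace_kernel q r \<Longrightarrow> (a::'a) + b \<in> trace_kernel q r"
  by (simp add: trace_kernel_def subfield_of_order_add trace_add)

lemma trace_kernel_diff:
  "a \<in> trace_kernel q r \<Longrightarrow> b \<in> trace_kernel q r \<Longrightarrow> (a::'a) - b \<in> trace_kernel q r"
  by (simp add: trace_kernel_def subfield_of_order_diff trace_diff)

lemma trace_kernel_uminus: "(a::'a) \<in> trace_kernel q r \<Longrightarrow> - a \<in> trace_kernel q r"
  using trace_kernel_diff[OF zero_mem_trace_kernel] by simp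

lemma card_trace_fibre_le:
  "card {y \<in> subfield_of_order (q ^ r). trace q r y = (c::'a)} \<le> card (trace_kernel q r :: 'a set)"
proof (cases "\<exists>t \<in> subfield_of_order (q ^ r). trace q r (t::'a) = c")
  case True
  then obtain t :: 'a where t: "t \<in> subfield_of_order (q ^ r)" "trace q r t = c"
    by blast
  have "{y \<in> subfield_of_order (q ^ r). trace q r y = c} \<subseteq> (\<lambda>k. t + k) ` trace_kernel q r"
  proof
    fix y assume "y \<in> {y \<in> subfield_of_order (q ^ r). trace q r y = c}"
    then have "y - t \<in> trace_kernel q r"
      using t by (simp add: trace_kernel_def subfield_of_order_diff trace_diff)
    then show "y \<in> (\<lambda>k. t + k) ` trace_kernel q r"
      by (rule rev_image_eqI) simp
  qed
  then have "card {y \<in> subfield_of_order (q ^ r). trace q r y = c} \<le> card ((\<lambda>k. t + k) ` trace_kernel q r)"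
    by (intro card_mono) simp_all
  also have "\<dots> \<le> card (trace_kernel q r :: 'a set)"
    by (rule card_image_le) simp
  finally show ?thesis .
next
  case False
  then have "{y \<in> subfield_of_order (q ^ r). trace q r y = c} = {}"
    by blast
  then show ?thesis
    by (simp only: card.empty le0)
qed

context
  fixes r :: nat
  assumes card_UNIV_eq: "card (UNIV :: 'a set) = (q ^ r) ^ 2"
begin

lemma two_le_q: "2 \<le> q"
  and r_pos: "0 < r"
proof -
  have Q: "2 \<le> q ^ r"
    using card_UNIV_eq by (rule two_le_sqrt_card)
  show "2 \<le> q"
  proof (rule ccontr)
    assume "\<not> 2 \<le> q"
    then have "q ^ r \<le> 1"
      by (intro power_le_one) auto
    with Q show False
      by simp
  qed
  show "0 < r"
    using Q by (cases r) auto
qed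

lemma trace_full_mem_subfield: "trace q (2 * r) (x::'a) \<in> subfield_of_order q"
proof (rule trace_mem_subfield)
  show "x \<in> subfield_of_order (q ^ (2 * r))"
    using power_card_UNIV_eq_self[of x] card_UNIV_eq
    by (simp add: subfield_of_order_def power_mult mult.commute)
qed

lemma card_trace_kernel: "q ^ (r - 1) \<le> card (trace_kernel q r :: 'a set)"
proof -
  let ?F = "subfield_of_order (q ^ r) :: 'a set"
  let ?K = "trace_kernel q r :: 'a set"
  let ?T = "trace q r :: 'a \<Rightarrow> 'a"
  have card_trace_image: "card (?T ` ?F) \<le> q"
  proof -
    have "?T ` ?F \<subseteq> subfield_of_order q"
      using trace_mem_subfield by blast
    then have "card (?T ` ?F) \<le> card {x::'a. x ^ q = x}"
      by (intro card_mono) (simp_all add: subfield_of_order_def)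
    also have "\<dots> \<le> q"
      using two_le_q by (intro card_power_eq_self_le) simp
    finally show ?thesis .
  qed
  have "q * q ^ (r - 1) = card ?F"
    using card_subfield_of_order[OF card_UNIV_eq] r_pos by (simp add: power_eq_if)
  also have "\<dots> = (\<Sum>c \<in> ?T ` ?F. card {y \<in> ?F. ?T y = c})"
    using sum.image_gen[of ?F "\<lambda>_. 1::nat" ?T] by simp
  also have "\<dots> \<le> card (?T ` ?F) * card ?K"
    using card_trace_fibre_le sum_bounded_above[of "?T ` ?F" _ "card ?K"] by simp
  also have "\<dots> \<le> q * card ?K"
    using card_trace_image by (rule mult_le_mono1)
  finally show ?thesis
    using two_le_q by simp
qed

lemma two_le_card_trace_kernel:
  assumes "2 \<le> r"
  shows "2 \<le> card (trace_kernel q r :: 'a set)"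
proof -
  have "q ^ 1 \<le> q ^ (r - 1)"
    using assms two_le_q by (intro power_increasing) auto
  then show ?thesis
    using two_le_q card_trace_kernel by simp
qed

lemma of_nat_card_trace_kernel:
  assumes "2 \<le> r"
  shows "of_nat (card (trace_kernel q r :: 'a set)) = (0::'a)"
  using two_le_card_trace_kernel[OF assms]
  by (intro of_nat_card_eq_0_if_add_closed) (simp_all add: trace_kernel_add)

lemma card_trace_kernel_gt_2_char_2:
  assumes "CHAR('a) = 2" and "2 \<le> r" and "(q, r) \<noteq> (2, 2)"
  shows "2 < card (trace_kernel q r :: 'a set)"
proof -
  have "4 \<le> q ^ (r - 1)"
  proof (cases "q = 2")
    case True
    then have "3 \<le> r"
      using assms(2,3) by auto
    then have "2 ^ 2 \<le> (2::nat) ^ (r - 1)"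
      by (intro power_increasing) auto
    then show ?thesis
      using True by simp
  next
    case False
    have "2 \<le> e"
    proof (rule ccontr)
      assume "\<not> 2 \<le> e"
      then have "e = 0 \<or> e = 1"
        by auto
      then show False
        using False q_CHAR_power assms(1) two_le_q by auto
    qed
    then have "2 ^ 2 \<le> q"
      using q_CHAR_power assms(1) power_increasing[of 2 e "2::nat"] by simp
    moreover have "q ^ 1 \<le> q ^ (r - 1)"
      using assms(2) two_le_q by (intro power_increasing) auto
    ultimately show ?thesis
      by simp
  qed
  then show ?thesis
    using card_trace_kernel by simp
qed

lemma sum_trace_kernel:
  assumes "2 \<le> r" and "(q, r) \<noteq> (2, 2)"
  shows "(\<Sum>a\<in>trace_kernel q r. a) = (0::'a)"
proof (cases "CHAR('a) = 2")
  case False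
  then have "(2::'a) \<noteq> 0"
    by (simp add: two_eq_zero_iff_CHAR_eq_2)
  then show ?thesis
    by (rule sum_eq_0_if_uminus_closed) (rule trace_kernel_uminus)
next
  case True
  then show ?thesis
    using card_trace_kernel_gt_2_char_2[OF True assms]
    by (intro sum_eq_0_if_add_closed_char_2) (simp_all add: trace_kernel_add two_eq_zero_iff_CHAR_eq_2)
qed

section \<open>Power sums over the defining set\<close>

lemma defset_eq_norm_preimage: "defset q r = {x::'a. x ^ (q ^ r + 1) \<in> trace_kernel q r}"
  using norm_mem_subfield[OF card_UNIV_eq] by (simp add: defset_def trace_kernel_def)

lemma of_nat_card_defset:
  assumes "2 \<le> r"
  shows "of_nat (card (defset q r :: 'a set)) = (0::'a)"
proof -
  have "of_nat (card (defset q r :: 'a set)) = (\<Sum>x\<in>(defset q r :: 'a set). 1::'a)"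
    by simp
  also have "\<dots> = (\<Sum>a\<in>(trace_kernel q r :: 'a set). 1)"
    using sum_norm_preimage[OF card_UNIV_eq trace_kernel_subset, of "\<lambda>_. 1"]
    by (simp add: defset_eq_norm_preimage)
  also have "\<dots> = 0"
    using of_nat_card_trace_kernel[OF assms] by simp
  finally show ?thesis .
qed

lemma sum_defset: "(\<Sum>x\<in>defset q r. x) = (0::'a)"
proof -
  obtain z :: 'a where "z ^ (q ^ r + 1) = 1" "z ^ 1 \<noteq> 1"
    using exists_norm_one_power_ne_one[OF card_UNIV_eq, of 1] q_pos by auto
  then have "(\<Sum>x\<in>defset q r. x ^ 1) = (0::'a)"
    by (rule sum_power_defset_eq_0)
  then show ?thesis
    by simp
qed

lemma sum_defset_power:
  assumes "j < 2 * r" and "j \<noteq> r"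
  shows "(\<Sum>x\<in>defset q r. x ^ (1 + q ^ j)) = (0::'a)"
proof (cases "j < r")
  case True
  have "q ^ j < q ^ r"
    using True two_le_q by (intro power_strict_increasing) auto
  then obtain z :: 'a where "z ^ (q ^ r + 1) = 1" "z ^ (1 + q ^ j) \<noteq> 1"
    using exists_norm_one_power_ne_one[OF card_UNIV_eq, of "1 + q ^ j"] by auto
  then show ?thesis
    by (rule sum_power_defset_eq_0)
next
  case False
  define i where "i = j - r"
  have i: "j = r + i" "0 < i" "i < r"
    using False assms i_def by auto
  have "q ^ 1 \<le> q ^ i"
    using i(2) two_le_q by (intro power_increasing) auto
  then have "2 \<le> q ^ i"
    using two_le_q by simp
  then have "0 < q ^ i - 1"
    by simp
  have "q ^ i < q ^ r"
    using i(3) two_le_q by (intro power_strict_increasing) auto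
  then have "q ^ i - 1 < q ^ r + 1"
    by linarith
  with \<open>0 < q ^ i - 1\<close> obtain z :: 'a where z: "z ^ (q ^ r + 1) = 1" "z ^ (q ^ i - 1) \<noteq> 1"
    using exists_norm_one_power_ne_one[OF card_UNIV_eq] by blast
  txt \<open>On the norm-one group \<open>z^(1+q^j)\<close> is the inverse of \<open>z^(q^i-1)\<close>.\<close>
  have "1 + q ^ j + (q ^ i - 1) = (q ^ r + 1) * q ^ i"
    using \<open>2 \<le> q ^ i\<close> i(1) by (simp add: power_add algebra_simps)
  then have "z ^ (1 + q ^ j) * z ^ (q ^ i - 1) = 1"
    using z(1) by (simp only: power_add[symmetric] power_mult power_one)
  then have "z ^ (1 + q ^ j) \<noteq> 1"
    using z(2) by auto
  with z(1) show ?thesis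
    by (rule sum_power_defset_eq_0)
qed

lemma sum_defset_norm:
  assumes "2 \<le> r" and "(q, r) \<noteq> (2, 2)"
  shows "(\<Sum>x\<in>defset q r. x ^ (q ^ r + 1)) = (0::'a)"
proof -
  have "(\<Sum>x\<in>defset q r. x ^ (q ^ r + 1)) = (\<Sum>a\<in>trace_kernel q r. a :: 'a)"
    unfolding defset_eq_norm_preimage
    by (rule sum_norm_preimage[OF card_UNIV_eq trace_kernel_subset])
  also have "\<dots> = 0"
    using assms by (rule sum_trace_kernel)
  finally show ?thesis .
qed

lemma sum_trace_defset: "(\<Sum>x\<in>defset q r. trace q (2 * r) (b * x)) = (0::'a)"
proof -
  have "(\<Sum>x\<in>defset q r. trace q (2 * r) (b * x)) = trace q (2 * r) (b * (\<Sum>x\<in>defset q r. x))"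
    by (simp add: trace_sum sum_distrib_left)
  then show ?thesis
    by (simp add: sum_defset trace_zero)
qed

lemma sum_mult_trace_defset:
  assumes "2 \<le> r" and "(q, r) \<noteq> (2, 2)"
  shows "(\<Sum>x\<in>defset q r. x * trace q (2 * r) (b * x)) = (0::'a)"
proof -
  have "(\<Sum>x\<in>defset q r. x * trace q (2 * r) (b * x))
      = (\<Sum>j<2 * r. b ^ (q ^ j) * (\<Sum>x\<in>defset q r. x ^ (1 + q ^ j)))"
    by (simp add: trace_def sum_distrib_left power_mult_distrib power_add mult_ac sum.swap[of _ "defset q r"])
  also have "\<dots> = 0"
  proof (rule sum.neutral, intro ballI)
    fix j assume "j \<in> {..<2 * r}"
    then show "b ^ (q ^ j) * (\<Sum>x\<in>defset q r. x ^ (1 + q ^ j)) = 0"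
      using sum_defset_power[of j] sum_defset_norm[OF assms] by (cases "j = r") (simp_all add: add.commute)
  qed
  finally show ?thesis .
qed

lemma sum_trace_mult_trace_defset:
  assumes "2 \<le> r" and "(q, r) \<noteq> (2, 2)"
  shows "(\<Sum>x\<in>defset q r. trace q (2 * r) (b * x) * trace q (2 * r) (c * x)) = (0::'a)"
proof -
  have "trace q (2 * r) (b * x) * trace q (2 * r) (c * x) = trace q (2 * r) (b * (x * trace q (2 * r) (c * x)))"
    for x :: 'a
    using trace_mult_subfield[of "trace q (2 * r) (c * x)" q "2 * r" "b * x"] trace_full_mem_subfield
    by (simp add: mult_ac)
  then have "(\<Sum>x\<in>defset q r. trace q (2 * r) (b * x) * trace q (2 * r) (c * x))
      = trace q (2 * r) (b * (\<Sum>x\<in>defset q r. x * trace q (2 * r) (c * x)))"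
    by (simp add: trace_sum sum_distrib_left)
  then show ?thesis
    using sum_mult_trace_defset[OF assms] by (simp add: trace_zero)
qed

lemma aug_code_self_orthogonal:
  assumes "2 \<le> r" and "(q, r) \<noteq> (2, 2)"
  shows "aug_code q r \<subseteq> dual_code (defset q r :: 'a set) q (aug_code q r)"
proof
  fix v :: "'a \<Rightarrow> 'a"
  assume "v \<in> aug_code q r"
  then obtain b2 c2 where v: "v = restrict (\<lambda>x. trace q (2 * r) (b2 * x) + c2) (defset q r)"
    and c2: "c2 \<in> subfield_of_order q"
    unfolding aug_code_def by blast
  show "v \<in> dual_code (defset q r) q (aug_code q r)"
    unfolding dual_code_def
  proof (intro CollectI conjI ballI)
    show "v \<in> defset q r \<rightarrow>\<^sub>E subfield_of_order q"
      using subfield_of_order_add[of "trace q (2 * r) (b2 * _)" 1 c2] trace_full_mem_subfield c2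
      by (simp add: v)
  next
    fix u :: "'a \<Rightarrow> 'a"
    assume "u \<in> aug_code q r"
    then obtain b1 c1 where u: "u = restrict (\<lambda>x. trace q (2 * r) (b1 * x) + c1) (defset q r)"
      unfolding aug_code_def by blast
    have "(\<Sum>x\<in>defset q r. u x * v x)
        = (\<Sum>x\<in>defset q r. trace q (2 * r) (b1 * x) * trace q (2 * r) (b2 * x))
          + c2 * (\<Sum>x\<in>defset q r. trace q (2 * r) (b1 * x))
          + c1 * (\<Sum>x\<in>defset q r. trace q (2 * r) (b2 * x))
          + of_nat (card (defset q r :: 'a set)) * (c1 * c2)"
      by (simp add: u v algebra_simps sum.distrib sum_distrib_left)
    then show "(\<Sum>x\<in>defset q r. u x * v x) = 0"
      by (simp add: sum_trace_mult_trace_defset[OF assms] sum_trace_defset of_nat_card_defset[OF assms(1)])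
  qed
qed

end

end

theorem theorem3p8:
  fixes p e r :: nat
  assumes "prime p" and "e \<ge> 1" and "r \<ge> 2"
    and "card (UNIV :: 'a::{field,finite} set) = (p ^ e) ^ (2 * r)"
    and "(p ^ e, r) \<noteq> (2, 2)"
  shows "aug_code (p ^ e) r \<subseteq> dual_code (defset (p ^ e) r :: 'a set) (p ^ e) (aug_code (p ^ e) r)"
proof -
  have "CHAR('a) = p"
    using assms(1) by (rule CHAR_eq_of_card_UNIV) (use assms(4) in \<open>simp only: power_mult[symmetric]\<close>)
  moreover have "card (UNIV :: 'a set) = ((p ^ e) ^ r) ^ 2"
    using assms(4) by (simp add: power_mult[symmetric] mult_ac)
  ultimately show ?thesis
    using aug_code_self_orthogonal[where 'a = 'a, of "p ^ e" e r] assms(3,5) by simp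
qed

end
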